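(* Let $X,Y,\tilde X$ be spaces with $X$ and $\tilde X$ compact Hausdorff, and let $k\colon\tilde X\to X$ be a surjective map. Then the homomorphism $\langle Y^k\rangle\colon\langle Y^X\rangle\to\langle Y^{\tilde X}\rangle$ satisfies $\langle Y^X\rangle^{(s)}=\langle Y^k\rangle^{-1}\big(\langle Y^{\tilde X}\rangle^{(s)}\big)$ for every $s\ge0$.
   Context: Spaces and maps are based. For a set $W$, $\langle W\rangle$ is the free abelian group with basis $\{\langle w\rangle\}$, and a function $f$ induces $\langle f\rangle$. $Y^X$ is the set of based maps $X\to Y$; $Y^k\colon Y^X\to Y^{\tilde X}$, $d\mapsto d\circ k$. For $R\subseteq X$ containing the basepoint, $V\mapsto V|_R$ is the homomorphism $\langle Y^X\rangle\to\langle Y^R\rangle$ induced by restriction. $\mathcal F_n(X)$ is the set of finite subsets $R\subseteq X$ containing the basepoint with $|R|\le n+1$, and $\langle Y^X\rangle^{(s)}=\{V\in\langle Y^X\rangle: V|_R=0\text{ for all }R\in\mathcal F_{s-1}(X)\}$ (similarly for $\tilde X$). *)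

theory Defs
  imports "HOL-Analysis.Analysis"
begin

text \<open>Free abelian group on a set W: finitely supported integer-valued functions
  supported in W.  The basis element for w is the indicator of w.\<close>
definition free_ab :: "'w set \<Rightarrow> ('w \<Rightarrow> int) set" where
  "free_ab W = {c. finite {w. c w \<noteq> 0} \<and> (\<forall>w. c w \<noteq> 0 \<longrightarrow> w \<in> W)}"

definition induced :: "('w \<Rightarrow> 'v) \<Rightarrow> ('w \<Rightarrow> int) \<Rightarrow> ('v \<Rightarrow> int)" where
  "induced f c = (\<lambda>v. \<Sum>w\<in>{w. c w \<noteq> 0 \<and> f w = v}. c w)"

definition based_maps :: "'a topology \<Rightarrow> 'a \<Rightarrow> 'b topology \<Rightarrow> 'b \<Rightarrow> ('a \<Rightarrow> 'b) set" where
  "based_maps X x0 Y y0 =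
     {d. continuous_map X Y d \<and> d x0 = y0 \<and> d \<in> extensional (topspace X)}"

definition finsubs :: "'a topology \<Rightarrow> 'a \<Rightarrow> nat \<Rightarrow> 'a set set" where
  "finsubs X x0 n = {R. finite R \<and> R \<subseteq> topspace X \<and> x0 \<in> R \<and> card R \<le> n + 1}"

text \<open>The filtration stage \<langle>Y^X\<rangle>^(s): elements all of whose restrictions to
  sets in F_(s-1)(X) vanish (F_(-1) is empty, i.e. finite R with card R \<le> s).\<close>
definition filt :: "'a topology \<Rightarrow> 'a \<Rightarrow> 'b topology \<Rightarrow> 'b \<Rightarrow> nat \<Rightarrow> (('a \<Rightarrow> 'b) \<Rightarrow> int) set" where
  "filt X x0 Y y0 s =
     {V \<in> free_ab (based_maps X x0 Y y0).
        \<forall>R. (s \<ge> 1 \<and> R \<in> finsubs X x0 (s - 1)) \<longrightarrow>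
            induced (\<lambda>d. restrict d R) V = (\<lambda>_. 0)}"

end

theory Submission
  imports Defs
begin

text \<open>Only the surjectivity of \<open>k\<close> matters. The images \<open>k ` R'\<close> of the sets \<open>R' \<in> F\<^sub>n(Xt)\<close> are exactly the sets of
  \<open>F\<^sub>n(X)\<close> (lift every non-base point of \<open>R\<close> to one preimage). Restricting \<open>\<langle>Y^k\<rangle>V\<close>
  to \<open>R'\<close> is \<open>V|\<^bsub>k ` R'\<^esub>\<close> followed by \<open>e \<mapsto> e \<circ> k\<close>, which is injective on maps
  \<open>k ` R' \<rightarrow> Y\<close> since \<open>R'\<close> maps onto \<open>k ` R'\<close>; so the two restrictions vanish together.\<close>

lemma induced_eq_sum:
  assumes "finite S" "{w. c w \<noteq> 0} \<subseteq> S"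
  shows "induced f c v = (\<Sum>w\<in>{w\<in>S. f w = v}. c w)"
  unfolding induced_def
  by (rule sum.mono_neutral_left) (use assms in \<open>auto intro: finite_subset\<close>)

lemma induced_support_subset: "{v. induced f c v \<noteq> 0} \<subseteq> f ` {w. c w \<noteq> 0}"
proof
  fix v assume "v \<in> {v. induced f c v \<noteq> 0}"
  then have "{w. c w \<noteq> 0 \<and> f w = v} \<noteq> {}" unfolding induced_def by force
  then show "v \<in> f ` {w. c w \<noteq> 0}" by blast
qed

lemma induced_zero [simp]: "induced f (\<lambda>_. 0) = (\<lambda>_. 0)"
  unfolding induced_def by simp

lemma free_ab_induced:
  assumes "c \<in> free_ab W" "f ` W \<subseteq> W'"
  shows "induced f c \<in> free_ab W'"
proof -
  have fin: "finite {w. c w \<noteq> 0}" and sub: "{w. c w \<noteq> 0} \<subseteq> W"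
    using assms(1) unfolding free_ab_def by auto
  have "finite {v. induced f c v \<noteq> 0}"
    using fin by (rule finite_imageI [THEN finite_subset [OF induced_support_subset]])
  moreover have "{v. induced f c v \<noteq> 0} \<subseteq> W'"
    using induced_support_subset [of f c] sub assms(2) by blast
  ultimately show ?thesis unfolding free_ab_def by blast
qed

lemma induced_comp:
  assumes "finite {w. c w \<noteq> 0}"
  shows "induced g (induced f c) = induced (g \<circ> f) c"
proof
  fix v
  let ?S = "{w. c w \<noteq> 0}"
  have "induced g (induced f c) v = (\<Sum>u\<in>{u\<in>f ` ?S. g u = v}. induced f c u)"
    using assms by (intro induced_eq_sum induced_support_subset) simp
  also have "\<dots> = (\<Sum>u\<in>{u\<in>f ` ?S. g u = v}. \<Sum>w\<in>{w\<in>{w\<in>?S. g (f w) = v}. f w = u}. c w)"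
  proof (rule sum.cong [OF refl])
    fix u assume u: "u \<in> {u\<in>f ` ?S. g u = v}"
    have "induced f c u = (\<Sum>w\<in>{w\<in>?S. f w = u}. c w)"
      by (rule induced_eq_sum [OF assms subset_refl])
    also have "{w\<in>?S. f w = u} = {w\<in>{w\<in>?S. g (f w) = v}. f w = u}"
      using u by auto
    finally show "induced f c u = (\<Sum>w\<in>{w\<in>{w\<in>?S. g (f w) = v}. f w = u}. c w)" .
  qed
  also have "\<dots> = (\<Sum>w\<in>{w\<in>?S. g (f w) = v}. c w)"
    by (rule sum.group) (use assms in auto)
  also have "\<dots> = induced (g \<circ> f) c v"
    unfolding induced_def by (simp add: conj_commute)
  finally show "induced g (induced f c) v = induced (g \<circ> f) c v" .
qed

lemma induced_eq_zero_iff_inj_on: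
  assumes "inj_on g {w. c w \<noteq> 0}"
  shows "induced g c = (\<lambda>_. 0) \<longleftrightarrow> c = (\<lambda>_. 0)"
proof
  assume zero: "induced g c = (\<lambda>_. 0)"
  show "c = (\<lambda>_. 0)"
  proof
    fix w show "c w = 0"
    proof (rule ccontr)
      assume "c w \<noteq> 0"
      then have "{w'. c w' \<noteq> 0 \<and> g w' = g w} = {w}"
        using assms by (auto dest: inj_onD)
      then have "induced g c (g w) = c w" unfolding induced_def by simp
      with zero \<open>c w \<noteq> 0\<close> show False by simp
    qed
  qed
qed simp

lemma inj_on_restrict_comp:
  "inj_on (\<lambda>e. restrict (e \<circ> k) R) (extensional (k ` R))"
proof (rule inj_onI)
  fix e1 e2
  assume ext: "e1 \<in> extensional (k ` R)" "e2 \<in> extensional (k ` R)"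
    and eq: "restrict (e1 \<circ> k) R = restrict (e2 \<circ> k) R"
  from ext show "e1 = e2"
  proof (rule extensionalityI)
    fix x assume "x \<in> k ` R"
    then obtain t where "t \<in> R" "x = k t" by blast
    then show "e1 x = e2 x" using fun_cong [OF eq, of t] by simp
  qed
qed

lemma restrict_pullback_eq_zero_iff:
  assumes "finite {d. V d \<noteq> 0}" "R \<subseteq> T"
  shows "induced (\<lambda>e. restrict e R) (induced (\<lambda>d. restrict (d \<circ> k) T) V) = (\<lambda>_. 0)
    \<longleftrightarrow> induced (\<lambda>d. restrict d (k ` R)) V = (\<lambda>_. 0)"
proof -
  let ?W = "induced (\<lambda>d. restrict d (k ` R)) V"
  have "(\<lambda>e. restrict e R) \<circ> (\<lambda>d. restrict (d \<circ> k) T)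
      = (\<lambda>e. restrict (e \<circ> k) R) \<circ> (\<lambda>d. restrict d (k ` R))"
    using assms(2) by (auto simp: restrict_def fun_eq_iff)
  then have "induced (\<lambda>e. restrict e R) (induced (\<lambda>d. restrict (d \<circ> k) T) V)
      = induced (\<lambda>e. restrict (e \<circ> k) R) ?W"
    using induced_comp [OF assms(1)] by metis
  moreover have "{e. ?W e \<noteq> 0} \<subseteq> extensional (k ` R)"
    using induced_support_subset [of "\<lambda>d. restrict d (k ` R)" V] by auto
  then have "inj_on (\<lambda>e. restrict (e \<circ> k) R) {e. ?W e \<noteq> 0}"
    by (rule inj_on_subset [OF inj_on_restrict_comp])
  ultimately show ?thesis by (simp only: induced_eq_zero_iff_inj_on)
qed

lemma image_finsubs:
  assumes "k ` topspace X' = topspace X" "x0' \<in> topspace X'" "k x0' = x0"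
  shows "(`) k ` finsubs X' x0' n = finsubs X x0 n"
proof
  show "(`) k ` finsubs X' x0' n \<subseteq> finsubs X x0 n"
  proof
    fix R assume "R \<in> (`) k ` finsubs X' x0' n"
    then obtain R' where R': "R' \<in> finsubs X' x0' n" and R: "R = k ` R'" by blast
    then have "card R \<le> card R'" using card_image_le unfolding finsubs_def by blast
    with R R' assms show "R \<in> finsubs X x0 n" unfolding finsubs_def by auto
  qed
next
  show "finsubs X x0 n \<subseteq> (`) k ` finsubs X' x0' n"
  proof
    fix R assume "R \<in> finsubs X x0 n"
    then have R: "finite R" "R \<subseteq> topspace X" "x0 \<in> R" "card R \<le> n + 1"
      unfolding finsubs_def by auto
    let ?g = "inv_into (topspace X') k"
    define R' where "R' = insert x0' (?g ` (R - {x0}))"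
    have "k ` ?g ` (R - {x0}) = R - {x0}"
      using R(2) assms(1) by (force simp: image_image f_inv_into_f)
    then have "k ` R' = R"
      unfolding R'_def using assms(3) R(3) by auto
    moreover have "card R' \<le> card R"
    proof -
      have "card R' \<le> Suc (card (?g ` (R - {x0})))"
        unfolding R'_def using R(1) by (simp add: card_insert_le_m1)
      also have "\<dots> \<le> Suc (card (R - {x0}))"
        using R(1) by (simp add: card_image_le)
      also have "\<dots> = card R"
        using R(1,3) by (rule card_Suc_Diff1)
      finally show ?thesis .
    qed
    then have "R' \<in> finsubs X' x0' n"
      using R assms(1,2) inv_into_into [of _ k "topspace X'"]
      unfolding R'_def finsubs_def by auto
    ultimately show "R \<in> (`) k ` finsubs X' x0' n" by blast
  qed
qed

lemma based_maps_pullback: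
  assumes "d \<in> based_maps X x0 Y y0" "continuous_map X' X k" "k x0' = x0" "x0' \<in> topspace X'"
  shows "restrict (d \<circ> k) (topspace X') \<in> based_maps X' x0' Y y0"
proof -
  have "continuous_map X' Y (d \<circ> k)"
    using assms(1,2) unfolding based_maps_def by (auto intro: continuous_map_compose)
  then have "continuous_map X' Y (restrict (d \<circ> k) (topspace X'))"
    by (rule continuous_map_eq) simp
  with assms show ?thesis unfolding based_maps_def by auto
qed

lemma restrict_pullback_vanish_iff:
  assumes "finite {d. V d \<noteq> 0}"
    and "k ` topspace X' = topspace X" "x0' \<in> topspace X'" "k x0' = x0"
  shows "(\<forall>R'\<in>finsubs X' x0' n.
      induced (\<lambda>e. restrict e R') (induced (\<lambda>d. restrict (d \<circ> k) (topspace X')) V) = (\<lambda>_. 0))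
    \<longleftrightarrow> (\<forall>R\<in>finsubs X x0 n. induced (\<lambda>d. restrict d R) V = (\<lambda>_. 0))"
proof -
  have "(\<forall>R'\<in>finsubs X' x0' n.
      induced (\<lambda>e. restrict e R') (induced (\<lambda>d. restrict (d \<circ> k) (topspace X')) V) = (\<lambda>_. 0))
    \<longleftrightarrow> (\<forall>R'\<in>finsubs X' x0' n. induced (\<lambda>d. restrict d (k ` R')) V = (\<lambda>_. 0))"
  proof (rule ball_cong [OF refl])
    fix R' assume "R' \<in> finsubs X' x0' n"
    then have "R' \<subseteq> topspace X'" by (simp add: finsubs_def)
    then show "induced (\<lambda>e. restrict e R') (induced (\<lambda>d. restrict (d \<circ> k) (topspace X')) V)
        = (\<lambda>_. 0) \<longleftrightarrow> induced (\<lambda>d. restrict d (k ` R')) V = (\<lambda>_. 0)"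
      by (rule restrict_pullback_eq_zero_iff [OF assms(1)])
  qed
  also have "\<dots> \<longleftrightarrow> (\<forall>R\<in>(`) k ` finsubs X' x0' n. induced (\<lambda>d. restrict d R) V = (\<lambda>_. 0))"
    by simp
  finally show ?thesis by (simp only: image_finsubs [OF assms(2-4)])
qed

theorem lemma3p2:
  fixes X :: "'a topology" and Xt :: "'t topology" and Y :: "'b topology"
    and x0 :: 'a and xt0 :: 't and y0 :: 'b and k :: "'t \<Rightarrow> 'a" and s :: nat
  assumes "x0 \<in> topspace X" and "xt0 \<in> topspace Xt" and "y0 \<in> topspace Y"
    and "compact_space X" and "Hausdorff_space X"
    and "compact_space Xt" and "Hausdorff_space Xt"
    and "continuous_map Xt X k" and "k xt0 = x0" and "k ` topspace Xt = topspace X"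
  shows "filt X x0 Y y0 s =
    {V \<in> free_ab (based_maps X x0 Y y0).
       induced (\<lambda>d. restrict (d \<circ> k) (topspace Xt)) V \<in> filt Xt xt0 Y y0 s}"
proof -
  let ?K = "\<lambda>d. restrict (d \<circ> k) (topspace Xt)"
  have "induced ?K V \<in> filt Xt xt0 Y y0 s \<longleftrightarrow> V \<in> filt X x0 Y y0 s"
    if V: "V \<in> free_ab (based_maps X x0 Y y0)" for V
  proof -
    have pullback: "induced ?K V \<in> free_ab (based_maps Xt xt0 Y y0)"
      by (rule free_ab_induced [OF V]) (auto intro: based_maps_pullback [OF _ assms(8,9,2)])
    have "finite {d. V d \<noteq> 0}" using V unfolding free_ab_def by auto
    note vanish = restrict_pullback_vanish_iff [OF this assms(10,2,9)]
    show ?thesis using V pullback vanish [of "s - 1"] unfolding filt_def by blast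
  qed
  moreover have "filt X x0 Y y0 s \<subseteq> free_ab (based_maps X x0 Y y0)"
    unfolding filt_def by blast
  ultimately show ?thesis by blast
qed

end
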